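(* Let $c\in\mathbb{F}_4$ satisfy $c^2+c+1=0$ and let $L(x)=x^4+cx$. Then $L$ is a bijection of $\mathbb{F}_{4^n}$ if and only if $3\nmid n$. Consequently, the function $F(x)=x^{12}+cx^3=L(x^3)$ is APN on $\mathbb{F}_{4^n}$ for every positive integer $n$ not divisible by $3$.
   Context: A function $f:K\to K$ on a finite field $K$ of characteristic $2$ is almost perfect nonlinear (APN) on $K$ if for all $a,b\in K$ with $a\ne0$ the equation $f(x+a)+f(x)=b$ has at most $2$ solutions $x\in K$. *)

theory Defs
  imports Main
begin

definition APN :: "('a::{field,finite} \<Rightarrow> 'a) \<Rightarrow> bool" where
  "APN f \<longleftrightarrow> (\<forall>a b. a \<noteq> 0 \<longrightarrow> card {x. f (x + a) + f x = b} \<le> 2)"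

end

theory Submission
  imports Defs "HOL-Number_Theory.Residues" "HOL-Computational_Algebra.Polynomial"
begin

(*
  Let K be a field with q = 4^n elements, c a primitive cube root of unity in K and
  L(x) = x^4 + c x.  Since K has characteristic 2, L is additive, so L is a bijection
  iff its kernel is trivial, and L(z) = z (z^3 + c) shows that this happens iff c is
  not the cube of a nonzero element.

  * If 3 | n then 9 | q - 1, hence c^((q-1)/3) = 1, and a counting argument on the
    cubing map of the multiplicative group shows that c is a cube.
  * If 3 does not divide n then gcd(9, q - 1) = 3; a cube root z of c satisfies
    z^9 = 1 and z^(q-1) = 1, hence z^3 = 1, contradicting c \<noteq> 1.

  For the APN property, F(x) = L(x^3), and in characteristic 2 we have
  F(x + a) + F(x) = L(a x^2 + a^2 x + a^3); as L is bijective, every equation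
  F(x + a) + F(x) = b is a nonzero quadratic equation in x with at most 2 roots.
*)

lemma CHAR_eq_2_if_card_power_of_2:
  assumes "card (UNIV :: 'a::{field,finite} set) = 2 ^ k"
  shows "CHAR('a) = 2"
proof -
  have "prime CHAR('a)"
    by (rule prime_CHAR_semidom) (simp add: finite_imp_CHAR_pos)
  moreover have "CHAR('a) dvd 2 ^ k"
    using CHAR_dvd_CARD[where 'a='a] assms by simp
  ultimately have "CHAR('a) dvd 2"
    using prime_dvd_power by blast
  then show ?thesis
    using \<open>prime CHAR('a)\<close> primes_dvd_imp_eq two_is_prime_nat by blast
qed

lemma two_eq_zero_if_CHAR_2:
  assumes "CHAR('a::ring_1) = 2"
  shows "(2::'a) = 0"
  using of_nat_CHAR[where 'a='a] assms by simp

lemma add_square_CHAR_2: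
  fixes u v :: "'a::comm_ring_1"
  assumes "CHAR('a) = 2"
  shows "(u + v) ^ 2 = u ^ 2 + v ^ 2"
proof -
  have "(u + v) ^ 2 = u ^ 2 + v ^ 2 + 2 * (u * v)"
    by (simp add: algebra_simps power2_eq_square)
  then show ?thesis
    using two_eq_zero_if_CHAR_2[OF assms] by simp
qed

text \<open>Fermat's little theorem for an arbitrary finite field (the library states it only
  for the class of finite fields of prime characteristic).\<close>
lemma finite_field_power_card_minus_1:
  fixes x :: "'a::{field,finite}"
  assumes "x \<noteq> 0"
  shows "x ^ (card (UNIV :: 'a set) - 1) = 1"
proof -
  have "(\<Prod>y\<in>UNIV-{0}. x * y) = x ^ card (UNIV-{0::'a}) * \<Prod>(UNIV-{0::'a})"
    by (simp add: prod.distrib)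
  moreover have "card (UNIV-{0::'a}) = card (UNIV :: 'a set) - 1"
    by (simp add: card_Diff_singleton)
  moreover have "(\<Prod>y\<in>UNIV-{0}. x * y) = (\<Prod>y\<in>UNIV-{0}. y)"
    by (rule prod.reindex_bij_witness[of _ "\<lambda>y. y / x" "\<lambda>y. x * y"]) (use assms in auto)
  moreover have "\<Prod>(UNIV-{0::'a}) \<noteq> 0"
    by simp
  ultimately show ?thesis
    by simp
qed

lemma card_roots_of_power_le:
  fixes a :: "'a::field"
  assumes "m > 0"
  shows "card {x. x ^ m = a} \<le> m"
proof -
  define p where "p = monom (1::'a) m + [:-a:]"
  have deg: "degree p = m"
    unfolding p_def using assms by (subst degree_add_eq_left) (auto simp: degree_monom_eq)
  then have "p \<noteq> 0"
    using assms by auto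
  moreover have "{x. x ^ m = a} = {x. poly p x = 0}"
    by (auto simp: p_def poly_monom)
  ultimately show ?thesis
    using card_poly_roots_bound deg by metis
qed

text \<open>The d-th powers of the
  q - 1 nonzero elements form at least (q-1)/d values, all roots of X^((q-1)/d) - 1,
  which has at most (q-1)/d roots; hence they are all its roots.\<close>
lemma power_of_nonzero_if_root_of_unity:
  fixes y :: "'a::{field,finite}"
  assumes "d > 0" and dvd: "d dvd card (UNIV :: 'a set) - 1"
    and y: "y ^ ((card (UNIV :: 'a set) - 1) div d) = 1"
  shows "\<exists>x. x \<noteq> 0 \<and> x ^ d = y"
proof -
  define q where "q = card (UNIV :: 'a set)"
  define m where "m = (q - 1) div d"
  have q_minus_1: "q - 1 = d * m"
    using dvd unfolding m_def q_def by simp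
  have "card {0::'a, 1} \<le> q"
    unfolding q_def by (rule card_mono) auto
  then have "m > 0"
    using q_minus_1 by (cases m) auto
  define T where "T = (\<lambda>x. x ^ d) ` (UNIV - {0::'a})"
  define R where "R = {z::'a. z ^ m = 1}"
  have T_sub_R: "T \<subseteq> R"
  proof
    fix z assume "z \<in> T"
    then obtain x where "x \<noteq> 0" "z = x ^ d"
      unfolding T_def by auto
    then show "z \<in> R"
      using finite_field_power_card_minus_1[of x] q_minus_1
      unfolding R_def q_def by (simp flip: power_mult)
  qed
  have "q - 1 = card (UNIV - {0::'a})"
    unfolding q_def by (simp add: card_Diff_singleton)
  also have "\<dots> \<le> card (\<Union>z\<in>T. {x. x ^ d = z})"
    unfolding T_def by (intro card_mono) auto
  also have "\<dots> \<le> (\<Sum>z\<in>T. card {x. x ^ d = z})"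
    by (rule card_UN_le) auto
  also have "\<dots> \<le> (\<Sum>z\<in>T. d)"
    by (intro sum_mono card_roots_of_power_le assms(1))
  finally have "m \<le> card T"
    using q_minus_1 \<open>d > 0\<close> by simp
  moreover have "card R \<le> m"
    unfolding R_def using card_roots_of_power_le[OF \<open>m > 0\<close>] .
  ultimately have "card T = card R"
    using card_mono[OF _ T_sub_R] by simp
  then have "T = R"
    using T_sub_R by (intro card_subset_eq) auto
  moreover have "y \<in> R"
    using y by (simp add: R_def m_def q_def)
  ultimately show ?thesis
    unfolding T_def by auto
qed

lemma power_gcd_eq_1:
  fixes z :: "'a::field"
  assumes "z ^ a = 1" "z ^ b = 1" "a \<noteq> 0"
  shows "z ^ gcd a b = 1"
proof -
  obtain u v where uv: "a * u = b * v + gcd a b"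
    using bezout_nat[OF assms(3)] by blast
  have "1 = (z ^ a) ^ u"
    using assms(1) by simp
  also have "\<dots> = (z ^ b) ^ v * z ^ gcd a b"
    by (simp only: uv power_add flip: power_mult)
  also have "\<dots> = z ^ gcd a b"
    using assms(2) by simp
  finally show ?thesis ..
qed

text \<open>Since 4^3 = 64 is 1 modulo 9, the residue of 4^n modulo 9 depends only on n mod 3.\<close>
lemma four_power_mod_9: "(4::nat) ^ n mod 9 = 4 ^ (n mod 3) mod 9"
proof -
  have "(4::nat) ^ n = 4 ^ (3 * (n div 3) + n mod 3)"
    by simp
  also have "\<dots> = 64 ^ (n div 3) * 4 ^ (n mod 3)"
    by (simp only: power_add power_mult) simp
  finally have "(4::nat) ^ n mod 9 = (64 ^ (n div 3) mod 9) * 4 ^ (n mod 3) mod 9"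
    by (simp add: mod_mult_left_eq)
  moreover have "(64::nat) ^ k mod 9 = 1" for k
    by (subst power_mod[symmetric]) simp
  ultimately show ?thesis
    by simp
qed

lemma nine_dvd_four_power_minus_1:
  assumes "3 dvd n"
  shows "9 dvd (4::nat) ^ n - 1"
proof -
  have "(4::nat) ^ n mod 9 = 1"
    using four_power_mod_9[of n] assms by simp
  then show ?thesis
    by (metis dvd_minus_mod mod_mod_trivial)
qed

text \<open>Otherwise 4^n - 1 is congruent to 3 or 6 modulo 9, so its gcd with 9 is 3.\<close>
lemma gcd_9_four_power_minus_1:
  assumes "\<not> 3 dvd n"
  shows "gcd 9 ((4::nat) ^ n - 1) = 3"
proof -
  define r where "r = (4::nat) ^ n mod 9"
  have "n mod 3 = 1 \<or> n mod 3 = 2"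
    using assms by presburger
  then have "r = 4 \<or> r = 7"
    using four_power_mod_9[of n] by (auto simp: r_def)
  moreover have "(4::nat) ^ n = 9 * (4 ^ n div 9) + r"
    by (simp add: r_def)
  ultimately have "(4::nat) ^ n - 1 = 9 * (4 ^ n div 9) + (r - 1)"
    by linarith
  then have "((4::nat) ^ n - 1) mod 9 = r - 1"
    using \<open>r = 4 \<or> r = 7\<close> by auto
  then have "gcd 9 ((4::nat) ^ n - 1) = gcd 9 (r - 1)"
    by (metis gcd.commute gcd_red_nat)
  also have "\<dots> = 3"
    using \<open>r = 4 \<or> r = 7\<close> gcd_red_nat[of 9 6] gcd_red_nat[of 6 3] by auto
  finally show ?thesis .
qed

lemma cube_root_of_primitive_cube_root_iff:
  fixes c :: "'a::{field,finite}"
  assumes card: "card (UNIV :: 'a set) = 4 ^ n"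
    and "c ^ 3 = 1" and "c \<noteq> 1"
  shows "(\<exists>z. z \<noteq> 0 \<and> z ^ 3 = c) \<longleftrightarrow> 3 dvd n"
proof
  assume "\<exists>z. z \<noteq> 0 \<and> z ^ 3 = c"
  then obtain z where "z \<noteq> 0" "z ^ 3 = c"
    by blast
  have "z ^ 9 = (z ^ 3) ^ 3"
    by (simp flip: power_mult)
  then have "z ^ 9 = 1"
    using \<open>z ^ 3 = c\<close> \<open>c ^ 3 = 1\<close> by simp
  moreover have "z ^ (4 ^ n - 1) = 1"
    using finite_field_power_card_minus_1[OF \<open>z \<noteq> 0\<close>] card by simp
  ultimately have "z ^ gcd 9 (4 ^ n - 1) = 1"
    by (rule power_gcd_eq_1) simp
  then show "3 dvd n"
    using gcd_9_four_power_minus_1[of n] \<open>z ^ 3 = c\<close> \<open>c \<noteq> 1\<close> by (cases "3 dvd n") auto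
next
  assume "3 dvd n"
  then have nine: "9 dvd card (UNIV :: 'a set) - 1"
    using nine_dvd_four_power_minus_1 card by simp
  then obtain k where "(card (UNIV :: 'a set) - 1) div 3 = 3 * k"
    by fastforce
  then have "c ^ ((card (UNIV :: 'a set) - 1) div 3) = 1"
    using \<open>c ^ 3 = 1\<close> by (simp add: power_mult)
  then show "\<exists>z. z \<noteq> 0 \<and> z ^ 3 = c"
    using nine by (intro power_of_nonzero_if_root_of_unity) (auto dest: dvd_mult_left)
qed

lemma additive_inj_iff_kernel:
  fixes f :: "'a::ab_group_add \<Rightarrow> 'b::ab_group_add"
  assumes add: "\<And>u v. f (u + v) = f u + f v"
  shows "inj f \<longleftrightarrow> (\<forall>z. f z = 0 \<longrightarrow> z = 0)"
proof -
  have diff: "f (x - y) = f x - f y" for x y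
    using add[of "x - y" y] by (simp add: algebra_simps)
  have "f 0 = 0"
    using add[of 0 0] by simp
  show ?thesis
  proof
    assume "inj f"
    then show "\<forall>z. f z = 0 \<longrightarrow> z = 0"
      using \<open>f 0 = 0\<close> by (metis injD)
  next
    assume kernel: "\<forall>z. f z = 0 \<longrightarrow> z = 0"
    show "inj f"
    proof (rule injI)
      fix x y
      assume "f x = f y"
      then have "f (x - y) = 0"
        using diff by simp
      then have "x - y = 0"
        using kernel by blast
      then show "x = y"
        by simp
    qed
  qed
qed

text \<open>In characteristic 2 the map x^4 + c x is additive, x^4 being the square of the
  Frobenius map.\<close>
lemma L_additive:
  fixes c u v :: "'a::comm_ring_1"
  assumes "CHAR('a) = 2"
  shows "(u + v) ^ 4 + c * (u + v) = (u ^ 4 + c * u) + (v ^ 4 + c * v)"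
proof -
  have fourth: "w ^ 4 = (w ^ 2) ^ 2" for w :: 'a
    by (simp flip: power_mult)
  have "(u + v) ^ 4 = u ^ 4 + v ^ 4"
    by (simp only: fourth add_square_CHAR_2[OF assms])
  then show ?thesis
    by (simp add: algebra_simps)
qed

text \<open>x^4 + c x is a bijection of a finite field of characteristic 2 iff c is not the cube
  of a nonzero element: its zeros are 0 and the cube roots of c.\<close>
lemma L_bij_iff_no_cube_root:
  fixes c :: "'a::{field,finite}"
  assumes "CHAR('a) = 2"
  shows "bij (\<lambda>x. x ^ 4 + c * x) \<longleftrightarrow> \<not> (\<exists>z. z \<noteq> 0 \<and> z ^ 3 = c)"
proof -
  have zero: "z ^ 4 + c * z = 0 \<longleftrightarrow> z = 0 \<or> z ^ 3 = c" for z :: 'a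
  proof -
    have "z ^ 4 + c * z = z * (z ^ 3 + c)"
      by (simp add: algebra_simps power3_eq_cube power4_eq_xxxx)
    moreover have "z ^ 3 + c = 0 \<longleftrightarrow> z ^ 3 = - c"
      by (simp add: eq_neg_iff_add_eq_0)
    moreover have "- c = c"
      by (rule uminus_CHAR_2[OF assms])
    ultimately show ?thesis
      by simp
  qed
  have "bij (\<lambda>x. x ^ 4 + c * x) \<longleftrightarrow> inj (\<lambda>x. x ^ 4 + c * x)"
    using finite_UNIV_inj_surj[of "\<lambda>x::'a. x ^ 4 + c * x"] by (auto simp: bij_def)
  also have "\<dots> \<longleftrightarrow> (\<forall>z. z ^ 4 + c * z = 0 \<longrightarrow> z = 0)"
    by (rule additive_inj_iff_kernel) (rule L_additive[OF assms])
  finally show ?thesis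
    by (auto simp: zero)
qed

text \<open>If L is an additive bijection of a finite field of characteristic 2, then L(x^3) is
  APN: F(x + a) + F(x) = L(a x^2 + a^2 x + a^3), so F(x + a) + F(x) = L(e) is the nonzero
  quadratic equation a x^2 + a^2 x + a^3 = e.\<close>
lemma APN_additive_bij_comp_cube:
  fixes L :: "'a::{field,finite} \<Rightarrow> 'a"
  assumes char: "CHAR('a) = 2"
    and add: "\<And>u v. L (u + v) = L u + L v"
    and "bij L"
  shows "APN (\<lambda>x. L (x ^ 3))"
  unfolding APN_def
proof (intro allI impI)
  fix a b :: 'a
  assume "a \<noteq> 0"
  obtain e where e: "b = L e"
    using \<open>bij L\<close> by (meson bij_pointE)
  have derivative: "L ((x + a) ^ 3) + L (x ^ 3) = L (a * x ^ 2 + a ^ 2 * x + a ^ 3)" for x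
  proof -
    have "(x + a) ^ 3 + x ^ 3 = a * x ^ 2 + a ^ 2 * x + a ^ 3 + 2 * (x ^ 3 + a * x ^ 2 + a ^ 2 * x)"
      by (simp add: algebra_simps power2_eq_square power3_eq_cube)
    then show ?thesis
      using add[of "(x + a) ^ 3" "x ^ 3"] two_eq_zero_if_CHAR_2[OF char] by simp
  qed
  define p where "p = [:a ^ 3 - e, a ^ 2, a:]"
  have "{x. L ((x + a) ^ 3) + L (x ^ 3) = b} = {x. poly p x = 0}"
    using derivative bij_is_inj[OF \<open>bij L\<close>]
    by (auto simp: e p_def algebra_simps power2_eq_square dest: injD)
  also have "card \<dots> \<le> degree p"
    by (rule card_poly_roots_bound) (use \<open>a \<noteq> 0\<close> in \<open>simp add: p_def\<close>)
  also have "degree p = 2"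
    using \<open>a \<noteq> 0\<close> by (simp add: p_def)
  finally show "card {x. L ((x + a) ^ 3) + L (x ^ 3) = b} \<le> 2" .
qed

theorem mainTheorem6:
  fixes c :: "'a::{field,finite}" and n :: nat
  assumes "n > 0"
    and "card (UNIV :: 'a set) = 4 ^ n"
    and "c ^ 2 + c + 1 = 0"
  shows "(bij (\<lambda>x::'a. x ^ 4 + c * x) \<longleftrightarrow> \<not> (3 dvd n))
         \<and> (\<not> (3 dvd n) \<longrightarrow> APN (\<lambda>x::'a. x ^ 12 + c * x ^ 3))"
proof -
  have char: "CHAR('a) = 2"
    using CHAR_eq_2_if_card_power_of_2[of "2 * n"] assms(2) by (simp add: power_mult)
  have "c ^ 3 - 1 = (c - 1) * (c ^ 2 + c + 1)"
    by (simp add: algebra_simps power2_eq_square power3_eq_cube)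
  then have "c ^ 3 = 1"
    using assms(3) by simp
  moreover have "c \<noteq> 1"
    using assms(3) two_eq_zero_if_CHAR_2[OF char] by auto
  ultimately have bij_iff: "bij (\<lambda>x::'a. x ^ 4 + c * x) \<longleftrightarrow> \<not> 3 dvd n"
    using L_bij_iff_no_cube_root[OF char] cube_root_of_primitive_cube_root_iff[OF assms(2)]
    by blast
  have "APN (\<lambda>x. (x ^ 3) ^ 4 + c * x ^ 3)" if "\<not> 3 dvd n"
    using APN_additive_bij_comp_cube[where L = "\<lambda>y. y ^ 4 + c * y", OF char L_additive[OF char]]
      bij_iff that by blast
  then show ?thesis
    using bij_iff by (simp flip: power_mult)
qed

end
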